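(* Let $n\in\mathbb{N}$, $K>0$, $\alpha,\beta,\kappa,a,c\in\mathbb{R}$, and let $H$ be a symmetric $n\times n$ real matrix with $-KI\preceq H\preceq KI$. Consider the symmetric $2n\times2n$ matrix $$A=\begin{pmatrix}\alpha I&\beta I+aH\\\beta I+aH&\kappa I+cH\end{pmatrix}.$$ If $-cK-\alpha-\kappa\le0$ in the case $c\le0$ (respectively $cK-\alpha-\kappa\le0$ in the case $c>0$), and $$a^2K^2-(c\alpha-2\beta a)K-\alpha\kappa+\beta^2\le0,\qquad a^2K^2+(c\alpha-2\beta a)K-\alpha\kappa+\beta^2\le0,$$ then $A$ is positive semidefinite.
   Context: $I$ denotes the $n\times n$ identity matrix and $\preceq$ the Loewner order on symmetric matrices. *)

theory Defs
  imports "Jordan_Normal_Form.Matrix"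
begin

definition psd :: "real mat \<Rightarrow> bool" where
  "psd M \<longleftrightarrow> M \<in> carrier_mat (dim_row M) (dim_row M) \<and> M\<^sup>T = M \<and>
     (\<forall>x \<in> carrier_vec (dim_row M). 0 \<le> x \<bullet> (M *\<^sub>v x))"

definition loewner_le :: "real mat \<Rightarrow> real mat \<Rightarrow> bool" where
  "loewner_le A B \<longleftrightarrow> dim_row A = dim_row B \<and> dim_col A = dim_col B \<and> psd (B - A)"

end

theory Submission
  imports Defs
begin

text \<open>Write the quadratic form at x = (u, v) as
  q(u, v) = \<alpha> u\<cdot>u + 2\<beta> u\<cdot>v + 2a u\<cdot>Hv + \<kappa> v\<cdot>v + c v\<cdot>Hv.
  For \<sigma> = \<plusminus>1 the matrix G = K I + \<sigma>H is psd, and the hypotheses say that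
  [\<alpha>, \<beta> + \<sigma>aK; \<beta> + \<sigma>aK, \<kappa> + \<sigma>cK] is psd (nonnegative trace and determinant).
  Pairing this 2\<times>2 matrix with the Gram-type matrix [u\<cdot>Gu, u\<cdot>Gv; u\<cdot>Gv, v\<cdot>Gv]
  gives a nonnegative number, and the two pairings for \<sigma> = \<plusminus>1 add up to 2K q(u, v).\<close>

lemma binary_form_pairing_nonneg:
  fixes p q r X Y Z :: real
  assumes trace: "0 \<le> p + r" and det: "q\<^sup>2 \<le> p * r"
    and form: "\<And>s t. 0 \<le> s\<^sup>2 * X + 2 * s * t * Y + t\<^sup>2 * Z"
  shows "0 \<le> p * X + 2 * q * Y + r * Z"
proof -
  have "0 \<le> p * r" using det zero_le_power2[of q] by linarith
  then have p: "0 \<le> p" and r: "0 \<le> r"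
    using trace by (auto simp: zero_le_mult_iff)
  have Z: "0 \<le> Z" using form[of 0 1] by simp
  show ?thesis
  proof (cases "p = 0")
    case True
    then have "q = 0" using det by simp
    then show ?thesis using True r Z by simp
  next
    case False
    have "0 \<le> p\<^sup>2 * X + 2 * p * q * Y + q\<^sup>2 * Z" using form[of p q] by simp
    moreover have "q\<^sup>2 * Z \<le> p * r * Z" using Z det by (simp add: mult_right_mono)
    ultimately have "0 \<le> p * (p * X + 2 * q * Y + r * Z)"
      by (simp add: power2_eq_square algebra_simps)
    then show ?thesis using p False by (simp add: zero_le_mult_iff)
  qed
qed

lemma smult_mat_mult_vec:
  fixes A :: "'a :: comm_semiring_0 mat"
  assumes "A \<in> carrier_mat nr nc" "w \<in> carrier_vec nc"
  shows "(k \<cdot>\<^sub>m A) *\<^sub>v w = k \<cdot>\<^sub>v (A *\<^sub>v w)"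
  using assms by (intro eq_vecI) (auto simp: scalar_prod_def sum_distrib_left ac_simps)

lemma transpose_smult_mat: "(k \<cdot>\<^sub>m A)\<^sup>T = k \<cdot>\<^sub>m A\<^sup>T"
  by (intro eq_matI) auto

lemma scalar_prod_smult_one_add_mult_vec:
  fixes H :: "'a :: comm_ring_1 mat"
  assumes "H \<in> carrier_mat n n" "u \<in> carrier_vec n" "w \<in> carrier_vec n"
  shows "u \<bullet> ((p \<cdot>\<^sub>m 1\<^sub>m n + q \<cdot>\<^sub>m H) *\<^sub>v w) = p * (u \<bullet> w) + q * (u \<bullet> (H *\<^sub>v w))"
  using assms by (simp add: add_mult_distrib_mat_vec[of _ n n] smult_mat_mult_vec[of _ n n]
      scalar_prod_add_distrib[of _ n])

lemma scalar_prod_mult_vec_commute: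
  fixes G :: "'a :: comm_semiring_0 mat"
  assumes G: "G \<in> carrier_mat n n" "G\<^sup>T = G" and u: "u \<in> carrier_vec n" and v: "v \<in> carrier_vec n"
  shows "v \<bullet> (G *\<^sub>v u) = u \<bullet> (G *\<^sub>v v)"
proof -
  have "v \<bullet> (G *\<^sub>v u) = (G\<^sup>T *\<^sub>v v) \<bullet> u"
    using transpose_vec_mult_scalar[OF G(1) u v] by simp
  also have "\<dots> = u \<bullet> (G *\<^sub>v v)" using G u v by (simp add: comm_scalar_prod[of _ n])
  finally show ?thesis .
qed

lemma quadratic_form_lincomb:
  fixes G :: "'a :: field mat"
  assumes G: "G \<in> carrier_mat n n" "G\<^sup>T = G" and u: "u \<in> carrier_vec n" and v: "v \<in> carrier_vec n"
  shows "(s \<cdot>\<^sub>v u + t \<cdot>\<^sub>v v) \<bullet> (G *\<^sub>v (s \<cdot>\<^sub>v u + t \<cdot>\<^sub>v v))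
     = s\<^sup>2 * (u \<bullet> (G *\<^sub>v u)) + 2 * s * t * (u \<bullet> (G *\<^sub>v v)) + t\<^sup>2 * (v \<bullet> (G *\<^sub>v v))"
proof -
  have "G *\<^sub>v (s \<cdot>\<^sub>v u + t \<cdot>\<^sub>v v) = s \<cdot>\<^sub>v (G *\<^sub>v u) + t \<cdot>\<^sub>v (G *\<^sub>v v)"
    using G u v by (simp add: mult_add_distrib_mat_vec[of _ n n] mult_mat_vec[of _ n n])
  then show ?thesis
    using G u v scalar_prod_mult_vec_commute[OF G u v]
    by (simp add: add_scalar_prod_distrib[of _ n] scalar_prod_add_distrib[of _ n]
        power2_eq_square algebra_simps)
qed

lemma psd_pairing_nonneg:
  fixes G :: "real mat"
  assumes G: "psd G" "G \<in> carrier_mat n n" and u: "u \<in> carrier_vec n" and v: "v \<in> carrier_vec n"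
    and "0 \<le> p + r" "q\<^sup>2 \<le> p * r"
  shows "0 \<le> p * (u \<bullet> (G *\<^sub>v u)) + 2 * q * (u \<bullet> (G *\<^sub>v v)) + r * (v \<bullet> (G *\<^sub>v v))"
proof (rule binary_form_pairing_nonneg[OF assms(5,6)])
  fix s t :: real
  have "G\<^sup>T = G" and "s \<cdot>\<^sub>v u + t \<cdot>\<^sub>v v \<in> carrier_vec (dim_row G)"
    using G u v unfolding psd_def by auto
  then show "0 \<le> s\<^sup>2 * (u \<bullet> (G *\<^sub>v u)) + 2 * s * t * (u \<bullet> (G *\<^sub>v v)) + t\<^sup>2 * (v \<bullet> (G *\<^sub>v v))"
    using G(1) unfolding psd_def quadratic_form_lincomb[OF G(2) \<open>G\<^sup>T = G\<close> u v, symmetric] by blast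
qed

lemma psd_four_block_matI:
  fixes A B D :: "real mat"
  assumes carrier: "A \<in> carrier_mat n n" "B \<in> carrier_mat n n" "D \<in> carrier_mat n n"
    and sym: "A\<^sup>T = A" "B\<^sup>T = B" "D\<^sup>T = D"
    and form: "\<And>u v. u \<in> carrier_vec n \<Longrightarrow> v \<in> carrier_vec n \<Longrightarrow>
      0 \<le> u \<bullet> (A *\<^sub>v u) + 2 * (u \<bullet> (B *\<^sub>v v)) + v \<bullet> (D *\<^sub>v v)"
  shows "psd (four_block_mat A B B D)"
proof -
  let ?M = "four_block_mat A B B D"
  have M: "?M \<in> carrier_mat (n + n) (n + n)" using four_block_carrier_mat[OF carrier(1,3)] .
  have "0 \<le> x \<bullet> (?M *\<^sub>v x)" if x: "x \<in> carrier_vec (n + n)" for x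
  proof -
    define u v where "u = vec_first x n" and "v = vec_last x n"
    have u: "u \<in> carrier_vec n" and v: "v \<in> carrier_vec n" unfolding u_def v_def by auto
    have "x \<bullet> (?M *\<^sub>v x) = (u @\<^sub>v v) \<bullet> ((A *\<^sub>v u + B *\<^sub>v v) @\<^sub>v (B *\<^sub>v u + D *\<^sub>v v))"
      using x four_block_mat_mult_vec[OF carrier(1,2,2,3) u v] unfolding u_def v_def by simp
    also have "\<dots> = u \<bullet> (A *\<^sub>v u) + 2 * (u \<bullet> (B *\<^sub>v v)) + v \<bullet> (D *\<^sub>v v)"
      using carrier u v scalar_prod_mult_vec_commute[OF carrier(2) sym(2) u v]
      by (simp add: scalar_prod_append[of _ n _ n] scalar_prod_add_distrib[of _ n])
    finally show ?thesis using form[OF u v] by simp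
  qed
  moreover have "?M\<^sup>T = ?M"
    using carrier sym by (simp add: transpose_four_block_mat[OF carrier(1,2,2,3)])
  ultimately show ?thesis using M carrier unfolding psd_def by auto
qed

lemma loewner_bounds_psd_shift:
  fixes H :: "real mat"
  assumes "H \<in> carrier_mat n n"
    and "loewner_le ((- K) \<cdot>\<^sub>m 1\<^sub>m n) H" and "loewner_le H (K \<cdot>\<^sub>m 1\<^sub>m n)"
    and "\<sigma> \<in> {-1, 1}"
  shows "psd (K \<cdot>\<^sub>m 1\<^sub>m n + \<sigma> \<cdot>\<^sub>m H)"
proof -
  have "K \<cdot>\<^sub>m 1\<^sub>m n + \<sigma> \<cdot>\<^sub>m H \<in> {K \<cdot>\<^sub>m 1\<^sub>m n - H, H - (- K) \<cdot>\<^sub>m 1\<^sub>m n}"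
    using assms(1,4) by (auto intro!: eq_matI)
  then show ?thesis using assms(2,3) unfolding loewner_le_def by auto
qed

lemma block_quadratic_form_nonneg:
  fixes H :: "real mat"
  assumes "0 < K" and H: "H \<in> carrier_mat n n"
    and "loewner_le ((- K) \<cdot>\<^sub>m 1\<^sub>m n) H" and "loewner_le H (K \<cdot>\<^sub>m 1\<^sub>m n)"
    and trace: "\<bar>c\<bar> * K \<le> \<alpha> + \<kappa>"
    and det: "(\<beta> - a * K)\<^sup>2 \<le> \<alpha> * (\<kappa> - c * K)" "(\<beta> + a * K)\<^sup>2 \<le> \<alpha> * (\<kappa> + c * K)"
    and u: "u \<in> carrier_vec n" and v: "v \<in> carrier_vec n"
  shows "0 \<le> \<alpha> * (u \<bullet> u) + 2 * \<beta> * (u \<bullet> v) + 2 * a * (u \<bullet> (H *\<^sub>v v))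
    + \<kappa> * (v \<bullet> v) + c * (v \<bullet> (H *\<^sub>v v))"
proof -
  have pairing: "0 \<le> \<alpha> * (K * (u \<bullet> u) + \<sigma> * (u \<bullet> (H *\<^sub>v u)))
      + 2 * (\<beta> + \<sigma> * a * K) * (K * (u \<bullet> v) + \<sigma> * (u \<bullet> (H *\<^sub>v v)))
      + (\<kappa> + \<sigma> * c * K) * (K * (v \<bullet> v) + \<sigma> * (v \<bullet> (H *\<^sub>v v)))"
    if \<sigma>: "\<sigma> \<in> {-1, 1}" for \<sigma>
  proof -
    let ?G = "K \<cdot>\<^sub>m 1\<^sub>m n + \<sigma> \<cdot>\<^sub>m H"
    have "\<bar>\<sigma> * c * K\<bar> = \<bar>c\<bar> * K" using \<sigma> \<open>0 < K\<close> by (auto simp: abs_mult)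
    then have "0 \<le> \<alpha> + (\<kappa> + \<sigma> * c * K)" using trace by linarith
    moreover have "(\<beta> + \<sigma> * a * K)\<^sup>2 \<le> \<alpha> * (\<kappa> + \<sigma> * c * K)" using \<sigma> det by auto
    ultimately have "0 \<le> \<alpha> * (u \<bullet> (?G *\<^sub>v u)) + 2 * (\<beta> + \<sigma> * a * K) * (u \<bullet> (?G *\<^sub>v v))
        + (\<kappa> + \<sigma> * c * K) * (v \<bullet> (?G *\<^sub>v v))"
      using loewner_bounds_psd_shift[OF H assms(3,4) \<sigma>] H u v by (intro psd_pairing_nonneg) auto
    then show ?thesis using H u v by (simp add: scalar_prod_smult_one_add_mult_vec)
  qed
  have "2 * K * (\<alpha> * (u \<bullet> u) + 2 * \<beta> * (u \<bullet> v) + 2 * a * (u \<bullet> (H *\<^sub>v v))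
      + \<kappa> * (v \<bullet> v) + c * (v \<bullet> (H *\<^sub>v v))) \<ge> 0"
    using pairing[of "-1"] pairing[of 1] by (simp add: algebra_simps)
  then show ?thesis using \<open>0 < K\<close> by (simp add: zero_le_mult_iff)
qed

theorem propositionF18:
  fixes n :: nat and K \<alpha> \<beta> \<kappa> a c :: real and H :: "real mat"
  assumes "K > 0"
    and "H \<in> carrier_mat n n" and "H\<^sup>T = H"
    and "loewner_le ((- K) \<cdot>\<^sub>m 1\<^sub>m n) H" and "loewner_le H (K \<cdot>\<^sub>m 1\<^sub>m n)"
    and "if c \<le> 0 then - c * K - \<alpha> - \<kappa> \<le> 0 else c * K - \<alpha> - \<kappa> \<le> 0"
    and "a\<^sup>2 * K\<^sup>2 - (c * \<alpha> - 2 * \<beta> * a) * K - \<alpha> * \<kappa> + \<beta>\<^sup>2 \<le> 0"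
    and "a\<^sup>2 * K\<^sup>2 + (c * \<alpha> - 2 * \<beta> * a) * K - \<alpha> * \<kappa> + \<beta>\<^sup>2 \<le> 0"
  shows "psd (four_block_mat (\<alpha> \<cdot>\<^sub>m 1\<^sub>m n) (\<beta> \<cdot>\<^sub>m 1\<^sub>m n + a \<cdot>\<^sub>m H)
                             (\<beta> \<cdot>\<^sub>m 1\<^sub>m n + a \<cdot>\<^sub>m H) (\<kappa> \<cdot>\<^sub>m 1\<^sub>m n + c \<cdot>\<^sub>m H))"
proof (rule psd_four_block_matI)
  have trace: "\<bar>c\<bar> * K \<le> \<alpha> + \<kappa>" using assms(6) by (auto split: if_splits)
  have det: "(\<beta> - a * K)\<^sup>2 \<le> \<alpha> * (\<kappa> - c * K)" "(\<beta> + a * K)\<^sup>2 \<le> \<alpha> * (\<kappa> + c * K)"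
    using assms(7,8) by (simp_all add: power2_eq_square algebra_simps)
  fix u v :: "real vec" assume u: "u \<in> carrier_vec n" and v: "v \<in> carrier_vec n"
  show "0 \<le> u \<bullet> ((\<alpha> \<cdot>\<^sub>m 1\<^sub>m n) *\<^sub>v u) + 2 * (u \<bullet> ((\<beta> \<cdot>\<^sub>m 1\<^sub>m n + a \<cdot>\<^sub>m H) *\<^sub>v v))
      + v \<bullet> ((\<kappa> \<cdot>\<^sub>m 1\<^sub>m n + c \<cdot>\<^sub>m H) *\<^sub>v v)"
    using block_quadratic_form_nonneg[OF assms(1,2,4,5) trace det u v] assms(2) u v
    by (simp add: scalar_prod_smult_one_add_mult_vec smult_mat_mult_vec[of _ n n] algebra_simps)
qed (use assms(2,3) in \<open>auto simp: transpose_add[of _ n n] transpose_smult_mat\<close>)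

end
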